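(* Let $D:\mathbb R^2\setminus\{0\}\to\mathbb R$ be nonnegative, bounded and continuously differentiable, and let $x:[a,b]\to\mathbb R^2\setminus\{0\}$ be a nonrectilinear solution of $\ddot x+D(x)\dot x=-x/|x|^3$. Set $r=|x|$, $c=\det(x,\dot x)$ and $v=-\frac1r+\frac{c^2}{2r^2}$. If $\dot r(t)\ge0$ for all $t\in[a,b]$ and $v(b)\ge0$, then $\dot v\le0$ on $[a,b]$.
   Context: A solution is nonrectilinear if $\det(x,\dot x)$ is not identically zero. *)

theory Defs
  imports "HOL-Analysis.Analysis"
begin

definition det2 :: "real \<times> real \<Rightarrow> real \<times> real \<Rightarrow> real" where
  "det2 p q = fst p * snd q - snd p * fst q"

end

theory Submission
  imports Defs
begin

text \<open>The angular momentum c = det(x, x') satisfies c' = - D(x) c, so c^2 is nonincreasing,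
  while r is nondecreasing by hypothesis. Differentiating the energy gives
  v' = r' (r - c^2) / r^3 - D(x) c^2 / r^2. Nonnegativity of v(b) means c(b)^2 \<ge> 2 r(b), hence
  c(t)^2 \<ge> c(b)^2 \<ge> 2 r(b) \<ge> 2 r(t) \<ge> r(t) for every t, and both terms of v' are nonpositive.\<close>

lemma has_real_derivative_unique_within_Icc:
  fixes f :: "real \<Rightarrow> real"
  assumes "a < b" "t \<in> {a..b}"
    and "(f has_real_derivative d) (at t within {a..b})"
    and "(f has_real_derivative e) (at t within {a..b})"
  shows "d = e"
  using vector_derivative_unique_within_closed_interval[of a b t f d e] assms
  by (simp add: has_real_derivative_iff_has_vector_derivative)

lemma mono_on_Icc_if_has_real_derivative_nonneg:
  fixes f f' :: "real \<Rightarrow> real"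
  assumes deriv: "\<And>s. s \<in> {a..b} \<Longrightarrow> (f has_real_derivative f' s) (at s within {a..b})"
    and nonneg: "\<And>s. s \<in> {a..b} \<Longrightarrow> 0 \<le> f' s"
  shows "mono_on {a..b} f"
proof (rule mono_onI)
  fix t u assume tu: "t \<in> {a..b}" "u \<in> {a..b}" "t \<le> u"
  have "(f has_derivative (\<lambda>h. f' s * h)) (at s within {t..u})" if "t \<le> s" "s \<le> u" for s
    using DERIV_subset[OF deriv] that tu unfolding has_field_derivative_def by auto
  from mvt_very_simple[OF \<open>t \<le> u\<close> this] obtain s where "s \<in> {t..u}" "f u - f t = f' s * (u - t)"
    by blast
  moreover have "0 \<le> f' s"
    using nonneg \<open>s \<in> {t..u}\<close> tu by auto
  ultimately show "f t \<le> f u"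
    using \<open>t \<le> u\<close> by (metis diff_ge_0_iff_ge mult_nonneg_nonneg)
qed

lemma has_vector_derivative_det2:
  assumes "(x has_vector_derivative x') (at t within S)"
    and "(y has_vector_derivative y') (at t within S)"
  shows "((\<lambda>s. det2 (x s) (y s)) has_real_derivative det2 x' (y t) + det2 (x t) y') (at t within S)"
proof -
  have components: "((\<lambda>s. fst (z s)) has_real_derivative fst z') (at t within S)"
    "((\<lambda>s. snd (z s)) has_real_derivative snd z') (at t within S)"
    if "(z has_vector_derivative z') (at t within S)" for z :: "real \<Rightarrow> real \<times> real" and z'
    using that unfolding has_real_derivative_iff_has_vector_derivative has_vector_derivative_def
    by (auto intro!: derivative_eq_intros)
  show ?thesis
    unfolding det2_def
    using components[OF assms(1)] components[OF assms(2)]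
    by (auto intro!: derivative_eq_intros simp: algebra_simps)
qed

text \<open>det2 (x t) (x' t) is the angular momentum; a central force does not change it.\<close>
lemma has_real_derivative_angular_momentum:
  assumes "(x has_vector_derivative x' t) (at t within S)"
    and "(x' has_vector_derivative x'' t) (at t within S)"
    and "x'' t + \<mu> *\<^sub>R x' t = \<phi> *\<^sub>R x t"
  shows "((\<lambda>s. det2 (x s) (x' s)) has_real_derivative - \<mu> * det2 (x t) (x' t)) (at t within S)"
proof -
  have x'': "x'' t = \<phi> *\<^sub>R x t - \<mu> *\<^sub>R x' t"
    using assms(3) by (simp add: algebra_simps)
  have "det2 (x' t) (x' t) + det2 (x t) (x'' t) = - \<mu> * det2 (x t) (x' t)"
    unfolding x'' by (simp add: det2_def algebra_simps)
  with has_vector_derivative_det2[OF assms(1,2)] show ?thesis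
    by simp
qed

definition kepler_energy :: "real \<Rightarrow> real \<Rightarrow> real" where
  "kepler_energy r c = - 1 / r + c\<^sup>2 / (2 * r\<^sup>2)"

lemma kepler_energy_nonneg_iff:
  assumes "r > 0"
  shows "0 \<le> kepler_energy r c \<longleftrightarrow> 2 * r \<le> c\<^sup>2"
proof -
  have "kepler_energy r c = (c\<^sup>2 - 2 * r) / (2 * r\<^sup>2)"
    using assms by (simp add: kepler_energy_def field_simps power2_eq_square)
  then show ?thesis
    using assms by (simp add: zero_le_divide_iff)
qed

lemma has_real_derivative_kepler_energy:
  assumes "(r has_real_derivative r') (at t within S)"
    and "(c has_real_derivative c') (at t within S)"
    and "r t > 0"
  shows "((\<lambda>s. kepler_energy (r s) (c s)) has_real_derivative
           r' * (r t - (c t)\<^sup>2) / r t ^ 3 + c t * c' / (r t)\<^sup>2) (at t within S)"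
proof -
  have "((\<lambda>s. - 1 / r s + (c s)\<^sup>2 / (2 * (r s)\<^sup>2)) has_real_derivative
      r' / (r t)\<^sup>2 + (2 * c t * c' * (2 * (r t)\<^sup>2) - (c t)\<^sup>2 * (2 * (2 * r t * r')))
         / (2 * (r t)\<^sup>2)\<^sup>2) (at t within S)"
    using assms by (auto intro!: derivative_eq_intros simp: power2_eq_square field_simps)
  moreover have "r' / (r t)\<^sup>2 + (2 * c t * c' * (2 * (r t)\<^sup>2) - (c t)\<^sup>2 * (2 * (2 * r t * r')))
         / (2 * (r t)\<^sup>2)\<^sup>2 = r' * (r t - (c t)\<^sup>2) / r t ^ 3 + c t * c' / (r t)\<^sup>2"
    using assms(3) by (simp add: field_simps power2_eq_square power3_eq_cube)
  ultimately show ?thesis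
    by (simp add: kepler_energy_def)
qed

lemma kepler_energy_derivative_nonpos:
  fixes r r' c \<mu> :: "real \<Rightarrow> real"
  assumes r_pos: "\<And>s. s \<in> {a..b} \<Longrightarrow> r s > 0"
    and r_deriv: "\<And>s. s \<in> {a..b} \<Longrightarrow> (r has_real_derivative r' s) (at s within {a..b})"
    and r'_nonneg: "\<And>s. s \<in> {a..b} \<Longrightarrow> 0 \<le> r' s"
    and c_deriv: "\<And>s. s \<in> {a..b} \<Longrightarrow> (c has_real_derivative - \<mu> s * c s) (at s within {a..b})"
    and \<mu>_nonneg: "\<And>s. s \<in> {a..b} \<Longrightarrow> 0 \<le> \<mu> s"
    and energy_b: "0 \<le> kepler_energy (r b) (c b)"
    and t: "t \<in> {a..b}"
  shows "r' t * (r t - (c t)\<^sup>2) / r t ^ 3 + c t * (- \<mu> t * c t) / (r t)\<^sup>2 \<le> 0"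
proof -
  have "b \<in> {a..b}" using t by auto
  have "r t \<le> r b"
    using mono_onD[OF mono_on_Icc_if_has_real_derivative_nonneg[OF r_deriv r'_nonneg]] t
      \<open>b \<in> {a..b}\<close> by auto
  moreover have "- (c t)\<^sup>2 \<le> - (c b)\<^sup>2"
  proof -
    have "((\<lambda>s. - (c s)\<^sup>2) has_real_derivative 2 * \<mu> s * (c s)\<^sup>2) (at s within {a..b})"
      if "s \<in> {a..b}" for s
      using c_deriv[OF that] by (auto intro!: derivative_eq_intros simp: power2_eq_square)
    from mono_onD[OF mono_on_Icc_if_has_real_derivative_nonneg[OF this]] \<mu>_nonneg t \<open>b \<in> {a..b}\<close>
    show ?thesis by auto
  qed
  moreover have "2 * r b \<le> (c b)\<^sup>2"
    using energy_b kepler_energy_nonneg_iff r_pos[OF \<open>b \<in> {a..b}\<close>] by blast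
  ultimately have "r t - (c t)\<^sup>2 \<le> 0"
    using r_pos[OF t] by linarith
  then have "r' t * (r t - (c t)\<^sup>2) / r t ^ 3 \<le> 0"
    using r'_nonneg[OF t] r_pos[OF t] by (simp add: divide_nonpos_pos mult_nonneg_nonpos)
  moreover have "c t * (- \<mu> t * c t) / (r t)\<^sup>2 = - (\<mu> t * (c t)\<^sup>2 / (r t)\<^sup>2)"
    by (simp add: power2_eq_square)
  moreover have "0 \<le> \<mu> t * (c t)\<^sup>2 / (r t)\<^sup>2"
    using \<mu>_nonneg[OF t] by simp
  ultimately show ?thesis
    by linarith
qed

theorem lemma7p3:
  fixes D :: "real \<times> real \<Rightarrow> real"
    and D' :: "real \<times> real \<Rightarrow> (real \<times> real) \<Rightarrow>\<^sub>L real"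
    and x x' x'' :: "real \<Rightarrow> real \<times> real"
    and a b :: real
  assumes D_nonneg: "\<forall>p. p \<noteq> 0 \<longrightarrow> D p \<ge> 0"
    and D_bounded: "bounded (D ` (UNIV - {0}))"
    and D_deriv: "\<forall>p. p \<noteq> 0 \<longrightarrow> (D has_derivative blinfun_apply (D' p)) (at p)"
    and D'_cont: "continuous_on (UNIV - {0}) D'"
    and ab: "a < b"
    and x_nz: "\<forall>t\<in>{a..b}. x t \<noteq> 0"
    and x_deriv: "\<forall>t\<in>{a..b}. (x has_vector_derivative x' t) (at t within {a..b})"
    and x'_deriv: "\<forall>t\<in>{a..b}. (x' has_vector_derivative x'' t) (at t within {a..b})"
    and ode: "\<forall>t\<in>{a..b}. x'' t + D (x t) *\<^sub>R x' t = - ((1 / norm (x t) ^ 3) *\<^sub>R x t)"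
    and nonrect: "\<exists>t\<in>{a..b}. det2 (x t) (x' t) \<noteq> 0"
    and r_incr: "\<forall>t\<in>{a..b}. \<forall>d. ((\<lambda>s. norm (x s)) has_real_derivative d) (at t within {a..b}) \<longrightarrow> d \<ge> 0"
    and vb: "- 1 / norm (x b) + (det2 (x b) (x' b))\<^sup>2 / (2 * (norm (x b))\<^sup>2) \<ge> 0"
  shows "\<forall>t\<in>{a..b}. \<forall>d. ((\<lambda>s. - 1 / norm (x s) + (det2 (x s) (x' s))\<^sup>2 / (2 * (norm (x s))\<^sup>2))
            has_real_derivative d) (at t within {a..b}) \<longrightarrow> d \<le> 0"
proof (intro ballI allI impI)
  fix t d
  assume t: "t \<in> {a..b}"
  define r where "r s = norm (x s)" for s
  define r' where "r' s = x' s \<bullet> sgn (x s)" for s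
  define c where "c s = det2 (x s) (x' s)" for s
  have r_deriv: "(r has_real_derivative r' s) (at s within {a..b})" if "s \<in> {a..b}" for s
    using has_derivative_compose[OF x_deriv[rule_format, OF that, unfolded has_vector_derivative_def]
        has_derivative_norm[OF x_nz[rule_format, OF that]]]
    by (simp add: r_def[abs_def] r'_def has_field_derivative_def mult_commute_abs)
  have c_deriv: "(c has_real_derivative - D (x s) * c s) (at s within {a..b})" if "s \<in> {a..b}" for s
    unfolding c_def using ode x_deriv x'_deriv that
    by (intro has_real_derivative_angular_momentum[where \<phi> = "- 1 / norm (x s) ^ 3"]) auto
  assume "((\<lambda>s. - 1 / norm (x s) + (det2 (x s) (x' s))\<^sup>2 / (2 * (norm (x s))\<^sup>2))
            has_real_derivative d) (at t within {a..b})"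
  then have "((\<lambda>s. kepler_energy (r s) (c s)) has_real_derivative d) (at t within {a..b})"
    by (simp add: kepler_energy_def r_def c_def)
  moreover have "r t > 0" using x_nz t by (simp add: r_def)
  ultimately have "d = r' t * (r t - (c t)\<^sup>2) / r t ^ 3 + c t * (- D (x t) * c t) / (r t)\<^sup>2"
    using has_real_derivative_kepler_energy[OF r_deriv c_deriv] t
    by (intro has_real_derivative_unique_within_Icc[OF ab t]) auto
  also have "\<dots> \<le> 0"
  proof (rule kepler_energy_derivative_nonpos[OF _ r_deriv _ c_deriv _ _ t])
    show "0 \<le> r' s" if "s \<in> {a..b}" for s
      using r_incr r_deriv[OF that] that by (auto simp: r_def[abs_def])
    show "0 \<le> kepler_energy (r b) (c b)"
      using vb by (simp add: kepler_energy_def r_def c_def)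
    show "0 \<le> D (x s)" if "s \<in> {a..b}" for s
      using D_nonneg x_nz that by blast
  qed (use x_nz in \<open>simp add: r_def\<close>)
  finally show "d \<le> 0" .
qed

end
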